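(* The set $\mathcal{AN}_{\operatorname{non}(\mathcal N)}$ is $2^{\operatorname{non}(\mathcal N)}$-algebrable in $\left(\mathbb R^{\mathbb R}\right)^{\operatorname{non}(\mathcal N)}$ (in ZFC).
   Context: For an infinite cardinal $\kappa$, a $\kappa$-sequence $(x_\alpha)_{\alpha<\kappa}$ converges to $x$ if for every neighbourhood $U$ of $x$ there is $\alpha_0<\kappa$ with $x_\alpha\in U$ for all $\alpha_0<\alpha<\kappa$; $\left(\mathbb R^{\mathbb R}\right)^{\kappa}$ is the commutative real algebra of $\kappa$-sequences of functions $\mathbb R\to\mathbb R$ with indexwise operations. $\operatorname{non}(\mathcal N)$ is the least cardinality of a subset of $[0,1]$ that is not Lebesgue null. $\mathcal{AN}_{\kappa}$: $\kappa$-sequences of Lebesgue measurable functions $f_\alpha:\mathbb R\to\mathbb R$ converging pointwise a.e. to a function that is not Lebesgue measurable. A subset $S$ of an algebra is $\mu$-algebrable if there is a subalgebra $B$ with $B\setminus\{0\}\subset S$, of vector-space dimension $\mu$, having a minimal system of generators $G$ with $\operatorname{card}(G)=\mu$ (minimal: $G$ generates $B$ and no $s\in G$ belongs to the algebra generated by $G\setminus\{s\}$). *)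

theory Defs
  imports "HOL-Analysis.Analysis"
begin

text \<open>The cardinal non(N) of the null ideal, as a property of a set S:
  S has cardinality non(N), the least cardinality of a non-null subset of [0,1].\<close>
definition has_card_nonN :: "'a set \<Rightarrow> bool" where
  "has_card_nonN S \<longleftrightarrow>
     (\<exists>A. A \<subseteq> {0..1::real} \<and> A \<notin> null_sets lebesgue \<and> (card_of A, card_of S) \<in> ordIso) \<and>
     (\<forall>A. A \<subseteq> {0..1::real} \<and> (card_of A, card_of S) \<in> ordLess \<longrightarrow> A \<in> null_sets lebesgue)"

text \<open>Convergence of a kappa-sequence indexed by the field of the well-order r
  (alpha < beta iff (alpha,beta) in r and alpha /= beta).\<close>
definition kconv :: "('i \<times> 'i) set \<Rightarrow> ('i \<Rightarrow> 'b::topological_space) \<Rightarrow> 'b \<Rightarrow> bool" where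
  "kconv r s l \<longleftrightarrow>
     (\<forall>U. open U \<and> l \<in> U \<longrightarrow>
        (\<exists>a0\<in>Field r. \<forall>a\<in>Field r. (a0, a) \<in> r \<and> a \<noteq> a0 \<longrightarrow> s a \<in> U))"

text \<open>The set AN_kappa in (R^R)^kappa, sequences indexed by the type 'i ordered by r.\<close>
definition AN :: "('i \<times> 'i) set \<Rightarrow> ('i \<Rightarrow> real \<Rightarrow> real) set" where
  "AN r = {F. (\<forall>i. F i \<in> borel_measurable lebesgue) \<and>
              (\<exists>f. f \<notin> borel_measurable lebesgue \<and>
                   (AE x in lebesgue. kconv r (\<lambda>i. F i x) (f x)))}"

definition subalg :: "('i \<Rightarrow> real \<Rightarrow> real) set \<Rightarrow> bool" where
  "subalg B \<longleftrightarrow> (\<lambda>i x. 0) \<in> B \<and>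
     (\<forall>F\<in>B. \<forall>G\<in>B. (\<lambda>i x. F i x + G i x) \<in> B \<and> (\<lambda>i x. F i x * G i x) \<in> B) \<and>
     (\<forall>F\<in>B. \<forall>c::real. (\<lambda>i x. c * F i x) \<in> B)"

definition alg_gen :: "('i \<Rightarrow> real \<Rightarrow> real) set \<Rightarrow> ('i \<Rightarrow> real \<Rightarrow> real) set" where
  "alg_gen G = \<Inter>{B. subalg B \<and> G \<subseteq> B}"

definition lin_span :: "('i \<Rightarrow> real \<Rightarrow> real) set \<Rightarrow> ('i \<Rightarrow> real \<Rightarrow> real) set" where
  "lin_span H = {F. \<exists>T c. finite T \<and> T \<subseteq> H \<and> F = (\<lambda>i x. \<Sum>t\<in>T. c t * t i x)}"

definition lin_indep :: "('i \<Rightarrow> real \<Rightarrow> real) set \<Rightarrow> bool" where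
  "lin_indep H \<longleftrightarrow> (\<forall>T c. finite T \<and> T \<subseteq> H \<and> (\<lambda>i x. \<Sum>t\<in>T. c t * t i x) = (\<lambda>i x. 0)
                        \<longrightarrow> (\<forall>t\<in>T. c t = (0::real)))"

definition vdim_eq :: "('i \<Rightarrow> real \<Rightarrow> real) set \<Rightarrow> 'm set \<Rightarrow> bool" where
  "vdim_eq B M \<longleftrightarrow> (\<exists>H. H \<subseteq> B \<and> lin_indep H \<and> lin_span H = B \<and> (card_of H, card_of M) \<in> ordIso)"

definition minimal_generators :: "('i \<Rightarrow> real \<Rightarrow> real) set \<Rightarrow> ('i \<Rightarrow> real \<Rightarrow> real) set \<Rightarrow> bool" where
  "minimal_generators G B \<longleftrightarrow> alg_gen G = B \<and> (\<forall>s\<in>G. s \<notin> alg_gen (G - {s}))"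

definition algebrable :: "'m set \<Rightarrow> ('i \<Rightarrow> real \<Rightarrow> real) set \<Rightarrow> bool" where
  "algebrable M S \<longleftrightarrow> (\<exists>B G. subalg B \<and> B - {\<lambda>i x. 0} \<subseteq> S \<and> vdim_eq B M \<and>
       minimal_generators G B \<and> (card_of G, card_of M) \<in> ordIso)"

end

theory Submission
  imports Defs "HOL-Library.Function_Algebras"
begin

(*
  Fix a partition of a set X of kappa = non(N) reals into kappa nonempty pieces such that every
  nonempty union of pieces is non-measurable: translates of a non-null set of size kappa with
  pairwise differences avoided, if kappa < c; otherwise a Bernstein-type partition built by
  transfinite recursion against the c closed non-null sets.

  Enumerate X along kappa; the i-th stage, the points enumerated before i, has fewer than
  non(N) points and is null. If h takes finitely many values, is constant on pieces and vanishes
  off X, its truncations to the stages are measurable and converge everywhere to h, whose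
  nonzero level sets are unions of pieces; so h is non-measurable unless h = 0. These
  truncations form an algebra. Indicators of unions of pieces indexed by an independent family
  of 2^kappa subsets of kappa give generators each of which separates two points that any
  finitely many others do not separate, hence a minimal system of generators, linearly
  independent; a Hamel basis extending them has size 2^kappa, as the algebra embeds in R^kappa.
*)

unbundle cardinal_syntax

section \<open>Cardinal arithmetic\<close>

lemma wf_recursive_choice:
  assumes "wf R"
    and ex: "\<And>a g. \<exists>t. P a g t"
    and cong: "\<And>a g g' t. (\<And>b. (b, a) \<in> R \<Longrightarrow> g b = g' b) \<Longrightarrow> P a g t \<Longrightarrow> P a g' t"
  shows "\<exists>f. \<forall>a. P a f (f a)"
proof -
  define f where "f = wfrec R (\<lambda>g a. SOME t. P a g t)"
  have "f a = (SOME t. P a (cut f R a) t)" for a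
    using def_wfrec[OF f_def[THEN eq_reflection] assms(1)] by simp
  then have "P a (cut f R a) (f a)" for a
    using someI_ex[OF ex] by metis
  then have "P a f (f a)" for a
    by (rule cong[rotated]) (simp add: cut_apply)
  then show ?thesis by blast
qed

lemma card_of_lists_UNIV_le:
  assumes "infinite (UNIV :: 'a set)"
  shows "|UNIV :: 'a list set| \<le>o |UNIV :: 'a set|"
proof -
  have len: "|{xs :: 'a list. length xs = n}| \<le>o |UNIV :: 'a set|" for n
  proof (induction n)
    case 0
    have "{xs :: 'a list. length xs = 0} = {[]}" by auto
    then show ?case using card_of_singl_ordLeq[of "UNIV :: 'a set"] by simp
  next
    case (Suc n)
    have "{xs :: 'a list. length xs = Suc n} = (\<lambda>(x, xs). x # xs) ` (UNIV \<times> {xs. length xs = n})"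
      by (auto simp: length_Suc_conv)
    then have "|{xs :: 'a list. length xs = Suc n}| \<le>o |(UNIV :: 'a set) \<times> {xs :: 'a list. length xs = n}|"
      by (metis card_of_image)
    also have "|(UNIV :: 'a set) \<times> {xs :: 'a list. length xs = n}| \<le>o |(UNIV :: 'a set) \<times> (UNIV :: 'a set)|"
      using Suc card_of_Times_mono2 by blast
    also have "|(UNIV :: 'a set) \<times> (UNIV :: 'a set)| =o |UNIV :: 'a set|"
      using assms card_of_Times_same_infinite by blast
    finally show ?case using ordIso_imp_ordLeq by blast
  qed
  have "|UNIV :: nat set| \<le>o |UNIV :: 'a set|"
    using assms infinite_iff_card_of_nat by blast
  then have "|\<Union>n\<in>(UNIV :: nat set). {xs :: 'a list. length xs = n}| \<le>o |UNIV :: 'a set|"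
    by (rule card_of_UNION_ordLeq_infinite[OF assms]) (use len in blast)
  moreover have "(UNIV :: 'a list set) = (\<Union>n. {xs. length xs = n})" by auto
  ultimately show ?thesis by simp
qed

lemma exists_inj_list_pairs_to_infinite:
  assumes "infinite (UNIV :: 'a set)"
  shows "\<exists>f :: 'a list \<times> 'a list list \<Rightarrow> 'a. inj f"
proof -
  have lists: "|UNIV :: 'a list set| \<le>o |UNIV :: 'a set|"
    using card_of_lists_UNIV_le assms by blast
  have "|UNIV :: 'a list list set| \<le>o |UNIV :: 'a list set|"
    using card_of_lists_UNIV_le infinite_UNIV_listI by blast
  then have "|UNIV :: 'a list list set| \<le>o |UNIV :: 'a set|"
    using lists by (rule ordLeq_transitive)
  then have "|(UNIV :: 'a list set) \<times> (UNIV :: 'a list list set)| \<le>o |(UNIV :: 'a list set) \<times> (UNIV :: 'a set)|"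
    by (rule card_of_Times_mono2)
  also have "|(UNIV :: 'a list set) \<times> (UNIV :: 'a set)| \<le>o |(UNIV :: 'a set) \<times> (UNIV :: 'a set)|"
    using lists by (rule card_of_Times_mono1)
  also have "|(UNIV :: 'a set) \<times> (UNIV :: 'a set)| =o |UNIV :: 'a set|"
    using assms card_of_Times_same_infinite by blast
  finally have "|UNIV :: ('a list \<times> 'a list list) set| \<le>o |UNIV :: 'a set|"
    by (simp only: UNIV_Times_UNIV)
  then show ?thesis
    by (simp only: card_of_ordLeq[symmetric]) blast
qed

lemma card_of_option_UNIV_le:
  assumes "infinite (UNIV :: 'a set)"
  shows "|UNIV :: 'a option set| \<le>o |UNIV :: 'a set|"
proof -
  have "(UNIV :: 'a option set) = insert None (range Some)"
    by (auto intro: option.exhaust)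
  moreover have "infinite (range (Some :: 'a \<Rightarrow> 'a option))"
    using assms finite_imageD inj_Some by blast
  ultimately have "(UNIV :: 'a option set) \<approx> range (Some :: 'a \<Rightarrow> 'a option)"
    using infinite_insert_eqpoll by metis
  moreover have "range (Some :: 'a \<Rightarrow> 'a option) \<approx> (UNIV :: 'a set)"
    using inj_on_image_eqpoll_self[of Some UNIV] by simp
  ultimately have "(UNIV :: 'a option set) \<approx> (UNIV :: 'a set)"
    using eqpoll_trans by blast
  then show ?thesis
    using eqpoll_iff_card_of_ordIso ordIso_imp_ordLeq by blast
qed

lemma card_of_real_funs_le_Pow:
  assumes "infinite (UNIV :: 'a set)"
  shows "|UNIV :: ('a \<Rightarrow> real) set| \<le>o |UNIV :: 'a set set|"
proof -
  have "(UNIV :: real set) \<approx> (UNIV :: nat set set)"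
    using nat_sets_eqpoll_reals eqpoll_sym by blast
  then obtain \<rho> :: "real \<Rightarrow> nat set" where "bij_betw \<rho> UNIV UNIV"
    unfolding eqpoll_def by blast
  then have inj_\<rho>: "inj \<rho>" by (simp add: bij_betw_def)
  have "|(UNIV :: 'a set) \<times> (UNIV :: nat set)| \<le>o |(UNIV :: 'a set) \<times> (UNIV :: 'a set)|"
    using assms infinite_iff_card_of_nat card_of_Times_mono2 by blast
  moreover have "|(UNIV :: 'a set) \<times> (UNIV :: 'a set)| =o |UNIV :: 'a set|"
    using assms card_of_Times_same_infinite by blast
  ultimately have "|(UNIV :: 'a set) \<times> (UNIV :: nat set)| \<le>o |UNIV :: 'a set|"
    using ordLeq_ordIso_trans by blast
  then obtain \<sigma> :: "'a \<times> nat \<Rightarrow> 'a" where inj_\<sigma>: "inj \<sigma>"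
    unfolding card_of_ordLeq[symmetric] UNIV_Times_UNIV by blast
  define \<Phi> where "\<Phi> f = \<sigma> ` {(a, n). n \<in> \<rho> (f a)}" for f :: "'a \<Rightarrow> real"
  have "inj \<Phi>"
  proof
    fix f f' :: "'a \<Rightarrow> real" assume "\<Phi> f = \<Phi> f'"
    then have "{(a, n). n \<in> \<rho> (f a)} = {(a, n). n \<in> \<rho> (f' a)}"
      unfolding \<Phi>_def using inj_\<sigma> by (simp add: inj_image_eq_iff)
    then have "\<rho> (f a) = \<rho> (f' a)" for a by (auto simp: set_eq_iff)
    then show "f = f'" using inj_\<rho> by (auto simp: inj_eq)
  qed
  then show ?thesis
    using card_of_ordLeq[of "UNIV :: ('a \<Rightarrow> real) set" "UNIV :: 'a set set"] by blast
qed

definition rat_interval_code :: "real set \<Rightarrow> (rat \<times> rat) set" where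
  "rat_interval_code F = {(p, q). {of_rat p<..<of_rat q} \<inter> F = {}}"

lemma rat_interval_code_separates:
  assumes "closed F'" "x \<in> F" "x \<notin> F'"
  shows "\<exists>pq. pq \<in> rat_interval_code F' \<and> pq \<notin> rat_interval_code F"
proof -
  have "open (- F')" using assms(1) by auto
  then obtain d where d: "d > 0" "\<And>z. dist z x < d \<Longrightarrow> z \<in> - F'"
    using assms(3) unfolding open_dist by blast
  obtain p :: rat where p: "x - d < of_rat p" "of_rat p < x"
    using of_rat_dense[of "x - d" x] d by auto
  obtain q :: rat where q: "x < of_rat q" "of_rat q < x + d"
    using of_rat_dense[of x "x + d"] d by auto
  have "{of_rat p<..<of_rat q} \<inter> F' = {}"
    using d(2) p q by (force simp: dist_real_def)
  moreover have "x \<in> {of_rat p<..<of_rat q} \<inter> F"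
    using p q assms(2) by auto
  ultimately show ?thesis
    unfolding rat_interval_code_def by blast
qed

lemma inj_on_rat_interval_code: "inj_on rat_interval_code {F. closed F}"
proof
  fix F F' assume "F \<in> {F. closed F}" "F' \<in> {F. closed F}"
    and "rat_interval_code F = rat_interval_code F'"
  then show "F = F'"
    using rat_interval_code_separates[of F] rat_interval_code_separates[of F'] by blast
qed

lemma card_of_closed_real_sets: "|{F :: real set. closed F}| \<le>o |UNIV :: real set|"
proof -
  obtain \<rho> :: "nat set \<Rightarrow> real" where "bij_betw \<rho> UNIV UNIV"
    using nat_sets_eqpoll_reals unfolding eqpoll_def by blast
  then have inj_\<rho>: "inj \<rho>" by (simp add: bij_betw_def)
  have inj_to_nat: "inj (to_nat :: rat \<times> rat \<Rightarrow> nat)" by simp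
  have "inj_on (\<lambda>F. \<rho> (to_nat ` rat_interval_code F)) {F. closed F}"
  proof
    fix F F' assume F: "F \<in> {F. closed F}" "F' \<in> {F. closed F}"
      and "\<rho> (to_nat ` rat_interval_code F) = \<rho> (to_nat ` rat_interval_code F')"
    then have "to_nat ` rat_interval_code F = to_nat ` rat_interval_code F'"
      using inj_\<rho> by (simp add: inj_eq)
    then have "rat_interval_code F = rat_interval_code F'"
      using inj_image_eq_iff[OF inj_to_nat] by blast
    then show "F = F'" using inj_on_rat_interval_code F by (simp add: inj_on_def)
  qed
  then show ?thesis
    using card_of_ordLeq[of "{F :: real set. closed F}" "UNIV :: real set"] by blast
qed

section \<open>Lebesgue measure on the line\<close>

lemma null_sets_if_card_ordLess:
  fixes K :: "'k set" and S :: "real set"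
  assumes unit: "\<And>A :: real set. A \<subseteq> {0..1} \<Longrightarrow> |A| <o |K| \<Longrightarrow> A \<in> null_sets lebesgue"
    and S: "|S| <o |K|"
  shows "S \<in> null_sets lebesgue"
proof -
  define S_at where "S_at n = S \<inter> {real_of_int n..real_of_int n + 1}" for n :: int
  have "negligible (S_at n)" for n
  proof -
    define T where "T = (\<lambda>x. x - real_of_int n) ` S_at n"
    have "|T| \<le>o |S_at n|" unfolding T_def by (rule card_of_image)
    also have "|S_at n| \<le>o |S|" unfolding S_at_def by (rule card_of_mono1) blast
    finally have "|T| <o |K|" using S ordLeq_ordLess_trans by blast
    moreover have "T \<subseteq> {0..1}" unfolding T_def S_at_def by auto
    ultimately have "negligible T" using unit negligible_iff_null_sets by blast
    then have "negligible ((+) (real_of_int n) ` T)" by (rule negligible_translation)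
    moreover have "(+) (real_of_int n) ` T = S_at n" unfolding T_def by (auto simp: image_image)
    ultimately show ?thesis by simp
  qed
  then have "negligible (\<Union>(range S_at))" by (intro negligible_countable_Union) auto
  moreover have "x \<in> S_at \<lfloor>x\<rfloor>" if "x \<in> S" for x
    using that unfolding S_at_def by (auto simp: of_int_floor_le)
  then have "S \<subseteq> \<Union>(range S_at)" by blast
  ultimately show ?thesis using negligible_subset negligible_iff_null_sets by blast
qed

lemma measure_lebesgue_atLeastAtMost: "x \<le> y \<Longrightarrow> measure lebesgue {x..y :: real} = y - x"
  by (subst measure_completion) auto

lemma exists_cball_not_negligible:
  fixes E :: "'a :: euclidean_space set"
  assumes "\<not> negligible E"
  shows "\<exists>n :: nat. \<not> negligible (E \<inter> cball 0 (real n))"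
proof (rule ccontr)
  assume "\<not> ?thesis"
  then have "negligible (\<Union>n. E \<inter> cball 0 (real n))" by (intro negligible_Union_nat) auto
  moreover have "E \<subseteq> (\<Union>n. E \<inter> cball 0 (real n))"
  proof
    fix x assume "x \<in> E"
    obtain n :: nat where "norm x \<le> real n" using real_arch_simple by blast
    then show "x \<in> (\<Union>n. E \<inter> cball 0 (real n))" using \<open>x \<in> E\<close> by auto
  qed
  ultimately show False using assms negligible_subset by blast
qed

lemma exists_closed_bounded_subset_not_null:
  fixes E :: "real set"
  assumes E: "E \<in> sets lebesgue" "E \<notin> null_sets lebesgue"
  shows "\<exists>F. closed F \<and> bounded F \<and> F \<subseteq> E \<and> F \<notin> null_sets lebesgue"
proof -
  have "\<not> negligible E" using E(2) negligible_iff_null_sets by blast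
  then obtain n :: nat where n: "\<not> negligible (E \<inter> cball 0 (real n))"
    using exists_cball_not_negligible by blast
  define E' where "E' = E \<inter> cball (0 :: real) (real n)"
  have bounded_E': "bounded E'" unfolding E'_def by (simp add: bounded_Int)
  have "E' \<in> sets lebesgue" unfolding E'_def by (meson E(1) fmeasurableD lmeasurable_cball sets.Int)
  then have E'_lmeasurable: "E' \<in> lmeasurable" by (rule bounded_set_imp_lmeasurable[OF bounded_E'])
  have "measure lebesgue E' \<noteq> 0"
    using n negligible_iff_measure0[OF E'_lmeasurable] unfolding E'_def by blast
  then have pos: "measure lebesgue E' > 0"
    using measure_nonneg[of lebesgue E'] by linarith
  then have "measure lebesgue E' / 2 > 0" by simp
  then obtain T where T: "closed T" "T \<subseteq> E'" "E' - T \<in> lmeasurable"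
      "emeasure lebesgue (E' - T) < ennreal (measure lebesgue E' / 2)"
    by (rule sets_lebesgue_inner_closed[OF \<open>E' \<in> sets lebesgue\<close>])
  have "T \<notin> null_sets lebesgue"
  proof
    assume "T \<in> null_sets lebesgue"
    then have "measure lebesgue (E' - T) = measure lebesgue E'"
      using measure_Diff_null_set E'_lmeasurable by blast
    then have "emeasure lebesgue (E' - T) = ennreal (measure lebesgue E')"
      using emeasure_eq_measure2[OF T(3)] by simp
    then show False using T(4) pos by (simp add: ennreal_less_iff)
  qed
  moreover have "bounded T" using T(2) bounded_E' bounded_subset by blast
  ultimately show ?thesis using T E'_def by blast
qed

lemma measure_Int_atMost_split:
  fixes F :: "real set"
  assumes "closed F" "bounded F" "x \<le> y"
  shows "measure lebesgue (F \<inter> {..y}) = measure lebesgue (F \<inter> {..x}) + measure lebesgue (F \<inter> {x<..y})"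
    and "measure lebesgue (F \<inter> {x<..y}) \<le> y - x"
proof -
  have lmeasurable: "F \<inter> {..z} \<in> lmeasurable" for z
    using assms(1,2) by (intro lmeasurable_compact) (auto simp: compact_eq_bounded_closed bounded_Int closed_Int)
  have set_eq: "F \<inter> {x<..y} = F \<inter> {..y} - F \<inter> {..x}" by auto
  then have diff: "F \<inter> {x<..y} \<in> lmeasurable"
    using lmeasurable by (simp add: fmeasurable_Diff fmeasurableD)
  have "F \<inter> {..x} \<union> F \<inter> {..y} = F \<inter> {..y}" using assms(3) by auto
  then have "measure lebesgue (F \<inter> {..y}) = measure lebesgue (F \<inter> {..x} \<union> F \<inter> {..y})"
    by (simp only:)
  also have "\<dots> = measure lebesgue (F \<inter> {..x}) + measure lebesgue (F \<inter> {..y} - F \<inter> {..x})"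
    by (rule measure_Un2[OF lmeasurable lmeasurable])
  finally show "measure lebesgue (F \<inter> {..y}) = measure lebesgue (F \<inter> {..x}) + measure lebesgue (F \<inter> {x<..y})"
    unfolding set_eq .
  have "measure lebesgue (F \<inter> {x<..y}) \<le> measure lebesgue {x..y}"
    using diff by (intro measure_mono_fmeasurable) auto
  then show "measure lebesgue (F \<inter> {x<..y}) \<le> y - x"
    using measure_lebesgue_atLeastAtMost[OF assms(3)] by simp
qed

lemma lipschitz_measure_Int_atMost:
  fixes F :: "real set"
  assumes "closed F" "bounded F"
  shows "1-lipschitz_on UNIV (\<lambda>x. measure lebesgue (F \<inter> {..x}))"
proof (rule lipschitz_onI)
  have le: "\<bar>measure lebesgue (F \<inter> {..x}) - measure lebesgue (F \<inter> {..y})\<bar> \<le> \<bar>x - y\<bar>" if "x \<le> y" for x y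
    using measure_Int_atMost_split[OF assms that] measure_nonneg[of lebesgue "F \<inter> {x<..y}"] by linarith
  show "dist (measure lebesgue (F \<inter> {..x})) (measure lebesgue (F \<inter> {..y})) \<le> 1 * dist x y" for x y
    using le[of x y] le[of y x] unfolding dist_real_def by (cases "x \<le> y") (simp_all add: abs_minus_commute)
qed simp

lemma measure_Int_atMost_eq_left_of_non_member:
  fixes F :: "real set"
  assumes closed: "closed F" and bounded: "bounded F" and "x \<notin> F" "a < x"
  shows "\<exists>x'. a \<le> x' \<and> x' < x \<and> measure lebesgue (F \<inter> {..x'}) = measure lebesgue (F \<inter> {..x})"
proof -
  have "open (- F)" using closed by auto
  then obtain d where d: "d > 0" "\<And>z. dist z x < d \<Longrightarrow> z \<in> - F"
    using \<open>x \<notin> F\<close> unfolding open_dist by blast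
  define x' where "x' = max a (x - d / 2)"
  have x': "a \<le> x'" "x' < x" unfolding x'_def using \<open>a < x\<close> d by auto
  have "z \<notin> F" if "x' < z" "z \<le> x" for z
    using d(2)[of z] that unfolding x'_def by (auto simp: dist_real_def)
  then have "F \<inter> {x'<..x} = {}" by auto
  then have "measure lebesgue (F \<inter> {..x'}) = measure lebesgue (F \<inter> {..x})"
    using measure_Int_atMost_split(1)[OF closed bounded, of x' x] x' by simp
  then show ?thesis using x' by blast
qed

lemma measure_Int_atMost_attained_in:
  fixes F :: "real set"
  assumes closed: "closed F" and bounded: "bounded F"
    and y: "0 < y" "y < measure lebesgue F"
  shows "\<exists>x\<in>F. measure lebesgue (F \<inter> {..x}) = y"
proof -
  define \<phi> where "\<phi> x = measure lebesgue (F \<inter> {..x})" for x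
  have cont: "continuous_on UNIV \<phi>"
    unfolding \<phi>_def using lipschitz_measure_Int_atMost[OF closed bounded] lipschitz_on_continuous_on by blast
  obtain R where R: "\<And>z. z \<in> F \<Longrightarrow> \<bar>z\<bar> \<le> R" using bounded unfolding bounded_iff by auto
  define a where "a = - R - 1"
  have F_below_a: "F \<inter> {..a} = {}" and F_le_R: "F \<inter> {..R} = F"
    using R unfolding a_def by force+
  have "F \<noteq> {}" using y by auto
  then have "a \<le> R" using R unfolding a_def by force
  have \<phi>_a: "\<phi> a = 0" unfolding \<phi>_def F_below_a by simp
  have \<phi>_R: "\<phi> R = measure lebesgue F" unfolding \<phi>_def F_le_R ..
  define S where "S = {x. a \<le> x \<and> x \<le> R \<and> \<phi> x = y}"
  have "\<exists>x. a \<le> x \<and> x \<le> R \<and> \<phi> x = y"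
    using y \<phi>_a \<phi>_R \<open>a \<le> R\<close> continuous_on_subset[OF cont] by (intro IVT') auto
  then have "S \<noteq> {}" unfolding S_def by blast
  moreover have below: "bdd_below S" unfolding S_def by (rule bdd_belowI[of _ a]) auto
  moreover have "closed S"
  proof -
    have "S = {a..R} \<inter> {x. \<phi> x = (\<lambda>_. y) x}" unfolding S_def by auto
    then show ?thesis using closed_Collect_eq[OF cont continuous_on_const] by auto
  qed
  ultimately have x0: "Inf S \<in> S" by (rule closed_contains_Inf)
  have "Inf S \<in> F"
  proof (rule ccontr)
    assume "Inf S \<notin> F"
    have "a \<le> Inf S" "Inf S \<noteq> a" using x0 \<phi>_a y unfolding S_def by auto
    then have "a < Inf S" by simp
    then obtain x1 where x1: "a \<le> x1" "x1 < Inf S" "\<phi> x1 = \<phi> (Inf S)"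
      using measure_Int_atMost_eq_left_of_non_member[OF closed bounded \<open>Inf S \<notin> F\<close>]
      unfolding \<phi>_def by blast
    then have "x1 \<in> S" using x0 unfolding S_def by auto
    then have "Inf S \<le> x1" using below by (rule cInf_lower)
    then show False using x1 by simp
  qed
  moreover have "\<phi> (Inf S) = y" using x0 unfolding S_def by simp
  ultimately show ?thesis unfolding \<phi>_def by blast
qed

lemma continuum_le_card_of_closed_not_null:
  fixes F :: "real set"
  assumes "closed F" "bounded F" "F \<notin> null_sets lebesgue"
  shows "|UNIV :: real set| \<le>o |F|"
proof -
  define m where "m = measure lebesgue F"
  have "F \<in> lmeasurable"
    using assms(1,2) by (intro lmeasurable_compact) (simp add: compact_eq_bounded_closed)
  moreover have "\<not> negligible F" using assms(3) negligible_iff_null_sets by blast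
  ultimately have "m \<noteq> 0" using negligible_iff_measure0 unfolding m_def by blast
  then have "m > 0" using measure_nonneg[of lebesgue F] unfolding m_def by linarith
  have "{0<..<m} \<subseteq> (\<lambda>x. measure lebesgue (F \<inter> {..x})) ` F"
  proof
    fix y assume "y \<in> {0<..<m}"
    then obtain x where "x \<in> F" "measure lebesgue (F \<inter> {..x}) = y"
      using measure_Int_atMost_attained_in[OF assms(1,2)] unfolding m_def by auto
    then show "y \<in> (\<lambda>x. measure lebesgue (F \<inter> {..x})) ` F" by (intro rev_image_eqI[of x]) auto
  qed
  then have "|{0<..<m}| \<le>o |(\<lambda>x. measure lebesgue (F \<inter> {..x})) ` F|"
    by (rule card_of_mono1)
  then have "|{0<..<m}| \<le>o |F|"
    using card_of_image by (rule ordLeq_transitive)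
  moreover have "|UNIV :: real set| =o |{0<..<m}|"
    using open_interval_eqpoll_reals[of 0 m] \<open>m > 0\<close> eqpoll_sym eqpoll_iff_card_of_ordIso by blast
  ultimately show ?thesis using ordIso_ordLeq_trans by blast
qed

definition closed_non_null :: "real set set" where
  "closed_non_null = {F. closed F \<and> bounded F \<and> F \<notin> null_sets lebesgue}"

lemma card_of_closed_non_null: "|closed_non_null| \<le>o |UNIV :: real set|"
proof -
  have "|closed_non_null| \<le>o |{F :: real set. closed F}|"
    unfolding closed_non_null_def by (rule card_of_mono1) blast
  then show ?thesis using card_of_closed_real_sets by (rule ordLeq_transitive)
qed

lemma not_lebesgue_measurable_if_card_less_continuum:
  fixes U :: "real set"
  assumes "|U| <o |UNIV :: real set|" "U \<notin> null_sets lebesgue"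
  shows "U \<notin> sets lebesgue"
proof
  assume "U \<in> sets lebesgue"
  then obtain F where F: "closed F" "bounded F" "F \<subseteq> U" "F \<notin> null_sets lebesgue"
    using exists_closed_bounded_subset_not_null assms(2) by blast
  have "|UNIV :: real set| \<le>o |F|" by (rule continuum_le_card_of_closed_not_null[OF F(1,2,4)])
  also have "|F| \<le>o |U|" using F(3) by (rule card_of_mono1)
  finally show False using assms(1) not_ordLess_ordLeq by blast
qed

lemma not_lebesgue_measurable_if_Bernstein:
  fixes U :: "real set"
  assumes "\<And>F. F \<in> closed_non_null \<Longrightarrow> \<not> F \<subseteq> U \<and> \<not> F \<subseteq> - U"
  shows "U \<notin> sets lebesgue"
proof
  assume U: "U \<in> sets lebesgue"
  have "\<not> negligible {0..1 :: real}"
    using negligible_iff_measure0[of "{0..1 :: real}"] measure_lebesgue_atLeastAtMost[of 0 1] by simp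
  then have "\<not> (negligible U \<and> negligible (- U))"
    using negligible_Un negligible_subset[of "U \<union> - U" "{0..1}"] by blast
  then have "U \<notin> null_sets lebesgue \<or> - U \<notin> null_sets lebesgue"
    using negligible_iff_null_sets by blast
  moreover have "UNIV - U \<in> sets lebesgue" using sets.compl_sets[OF U] by simp
  then have "- U \<in> sets lebesgue" by (simp add: Compl_eq_Diff_UNIV)
  ultimately obtain F where "closed F" "bounded F" "F \<notin> null_sets lebesgue" "F \<subseteq> U \<or> F \<subseteq> - U"
    using exists_closed_bounded_subset_not_null U by metis
  then show False using assms unfolding closed_non_null_def by blast
qed

section \<open>Subalgebras of sequences of real functions\<close>

interpretation seq: vector_space "\<lambda>(c :: real) (F :: 'i \<Rightarrow> real \<Rightarrow> real) i x. c * F i x"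
  by unfold_locales (auto simp: fun_eq_iff algebra_simps)

lemma sum_seq_apply:
  "(\<Sum>t\<in>T. (\<lambda>i x. c t * t i x)) = (\<lambda>i x. \<Sum>t\<in>T. c t * (t i x :: real))"
  by (induction T rule: infinite_finite_induct) (auto simp: fun_eq_iff)

lemma lin_span_eq_span: "lin_span H = seq.span H"
  unfolding lin_span_def seq.span_explicit sum_seq_apply by blast

lemma lin_indep_iff_independent: "lin_indep H \<longleftrightarrow> seq.independent H"
  unfolding lin_indep_def seq.dependent_explicit sum_seq_apply zero_fun_def by blast

lemma subalg_Inter: "(\<And>B. B \<in> \<B> \<Longrightarrow> subalg B) \<Longrightarrow> subalg (\<Inter>\<B>)"
  unfolding subalg_def by auto

lemma subalg_alg_gen: "subalg (alg_gen G)"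
  unfolding alg_gen_def by (rule subalg_Inter) auto

lemma alg_gen_minimal: "subalg B \<Longrightarrow> G \<subseteq> B \<Longrightarrow> alg_gen G \<subseteq> B"
  unfolding alg_gen_def by auto

lemma subset_alg_gen: "G \<subseteq> alg_gen G"
  unfolding alg_gen_def by auto

lemma subalg_imp_subspace: "subalg B \<Longrightarrow> seq.subspace B"
  unfolding subalg_def seq.subspace_def plus_fun_def zero_fun_def by simp

lemma lin_span_subalg: "subalg B \<Longrightarrow> H \<subseteq> B \<Longrightarrow> lin_span H \<subseteq> B"
  unfolding lin_span_eq_span by (rule seq.span_minimal) (simp_all add: subalg_imp_subspace)

lemma exists_basis_extending:
  assumes "subalg B" "H\<^sub>0 \<subseteq> B" "lin_indep H\<^sub>0"
  shows "\<exists>H. H\<^sub>0 \<subseteq> H \<and> H \<subseteq> B \<and> lin_indep H \<and> lin_span H = B"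
proof -
  obtain H where H: "H\<^sub>0 \<subseteq> H" "H \<subseteq> B" "seq.independent H" "B \<subseteq> seq.span H"
    using assms(2,3) seq.maximal_independent_subset_extend unfolding lin_indep_iff_independent
    by metis
  have "lin_span H = B"
    using H(2,4) lin_span_subalg[OF assms(1) H(2)] unfolding lin_span_eq_span by blast
  then show ?thesis using H lin_indep_iff_independent by blast
qed

lemma lin_indep_if_minimal_generators:
  assumes "minimal_generators G B"
  shows "lin_indep G"
proof -
  have "s \<notin> seq.span (G - {s})" if "s \<in> G" for s
  proof -
    have "seq.span (G - {s}) \<subseteq> alg_gen (G - {s})"
      unfolding lin_span_eq_span[symmetric] by (rule lin_span_subalg[OF subalg_alg_gen subset_alg_gen])
    then show ?thesis using assms that unfolding minimal_generators_def by blast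
  qed
  then show ?thesis unfolding lin_indep_iff_independent seq.dependent_def by blast
qed

definition determined_by :: "('i \<Rightarrow> real \<Rightarrow> real) set \<Rightarrow> ('i \<Rightarrow> real \<Rightarrow> real) set" where
  "determined_by T = {F. \<forall>i x y. (\<forall>t\<in>T. t i x = t i y) \<longrightarrow> F i x = F i y}"

lemma determined_by_mono: "T \<subseteq> T' \<Longrightarrow> determined_by T \<subseteq> determined_by T'"
  unfolding determined_by_def by blast

lemma subalg_finitely_determined:
  "subalg {F. \<exists>T. finite T \<and> T \<subseteq> S \<and> F \<in> determined_by T}" (is "subalg ?K")
  unfolding subalg_def
proof (intro conjI ballI allI)
  show "(\<lambda>i x. 0) \<in> ?K"
    by (rule CollectI, rule exI[of _ "{}"]) (simp add: determined_by_def)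
next
  fix F G assume "F \<in> ?K" "G \<in> ?K"
  then obtain T T' where T: "finite T" "T \<subseteq> S" "F \<in> determined_by T"
    and T': "finite T'" "T' \<subseteq> S" "G \<in> determined_by T'" by blast
  then have "F \<in> determined_by (T \<union> T')" "G \<in> determined_by (T \<union> T')"
    using determined_by_mono[of T "T \<union> T'"] determined_by_mono[of T' "T \<union> T'"] by auto
  then have "(\<lambda>i x. F i x + G i x) \<in> determined_by (T \<union> T')"
    and "(\<lambda>i x. F i x * G i x) \<in> determined_by (T \<union> T')"
    unfolding determined_by_def by simp_all
  moreover have "finite (T \<union> T')" "T \<union> T' \<subseteq> S" using T T' by auto
  ultimately show "(\<lambda>i x. F i x + G i x) \<in> ?K" "(\<lambda>i x. F i x * G i x) \<in> ?K" by blast+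
next
  fix F and c :: real assume "F \<in> ?K"
  then obtain T where T: "finite T" "T \<subseteq> S" "F \<in> determined_by T" by blast
  then have "(\<lambda>i x. c * F i x) \<in> determined_by T" unfolding determined_by_def by simp
  then show "(\<lambda>i x. c * F i x) \<in> ?K" using T by blast
qed

definition separates_independently :: "('i \<Rightarrow> real \<Rightarrow> real) set \<Rightarrow> bool" where
  "separates_independently G \<longleftrightarrow>
     (\<forall>s\<in>G. \<forall>T. finite T \<and> T \<subseteq> G - {s} \<longrightarrow> (\<exists>i x y. (\<forall>t\<in>T. t i x = t i y) \<and> s i x \<noteq> s i y))"

lemma minimal_generators_alg_gen:
  assumes "separates_independently G"
  shows "minimal_generators G (alg_gen G)"
  unfolding minimal_generators_def
proof (intro conjI ballI refl)
  fix s assume s: "s \<in> G"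
  let ?K = "{F. \<exists>T. finite T \<and> T \<subseteq> G - {s} \<and> F \<in> determined_by T}"
  have "t \<in> determined_by {t}" for t unfolding determined_by_def by blast
  then have "t \<in> ?K" if "t \<in> G - {s}" for t
    using that by blast
  then have "alg_gen (G - {s}) \<subseteq> ?K"
    by (intro alg_gen_minimal[OF subalg_finitely_determined]) blast
  moreover have "s \<notin> ?K"
  proof
    assume "s \<in> ?K"
    then obtain T where T: "finite T" "T \<subseteq> G - {s}" and "s \<in> determined_by T" by blast
    obtain i x y where sep: "\<forall>t\<in>T. t i x = t i y" "s i x \<noteq> s i y"
      using assms s T unfolding separates_independently_def by meson
    have "(\<forall>t\<in>T. t i x = t i y) \<longrightarrow> s i x = s i y"
      using \<open>s \<in> determined_by T\<close> unfolding determined_by_def by blast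
    then show False using sep by blast
  qed
  ultimately show "s \<notin> alg_gen (G - {s})" by blast
qed

section \<open>Non-measurable partitions\<close>

locale infinite_card_order =
  fixes r :: "('i \<times> 'i) set"
  assumes card_order: "card_order r"
    and infinite_UNIV: "infinite (UNIV :: 'i set)"
begin

lemma Field_r: "Field r = UNIV"
  using card_order card_order_on_well_order_on well_order_on_Field by metis

lemma Card_order_r: "Card_order r"
  using card_order card_order_on_Card_order Field_r by metis

lemma Well_order_r: "Well_order r"
  using Card_order_r card_order_on_def by blast

lemma card_of_underS_less: "|underS r a| <o |UNIV :: 'i set|"
proof -
  have "r =o |UNIV :: 'i set|"
    using card_of_Field_ordIso[OF Card_order_r] Field_r ordIso_symmetric by metis
  then show ?thesis
    using card_of_underS[OF Card_order_r] Field_r ordLess_ordIso_trans by blast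
qed

lemma r_refl: "(a, a) \<in> r"
  using Well_order_r Field_r unfolding order_on_defs refl_on_def by auto

lemma r_trans: "(a, b) \<in> r \<Longrightarrow> (b, c) \<in> r \<Longrightarrow> (a, c) \<in> r"
  using Well_order_r unfolding order_on_defs trans_def by blast

lemma r_antisym: "(a, b) \<in> r \<Longrightarrow> (b, a) \<in> r \<Longrightarrow> a = b"
  using Well_order_r unfolding order_on_defs antisym_def by blast

lemma r_total: "(a, b) \<in> r \<or> (b, a) \<in> r"
  using Well_order_r Field_r r_refl unfolding order_on_defs total_on_def by (cases "a = b") auto

lemma wf_r_minus_Id: "wf (r - Id)"
  using Well_order_r wo_rel.WF wo_rel_def by blast

lemma exists_underS: "\<exists>b. a \<in> underS r b"
proof -
  have "\<not> (\<exists>a. Field r = under r a)"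
    using Card_order_infinite_not_under[OF Card_order_r] Field_r infinite_UNIV by simp
  then obtain b where "b \<notin> under r a" using Field_r by auto
  then have "(a, b) \<in> r" "a \<noteq> b" using r_total r_refl by (auto simp: under_def)
  then show ?thesis by (auto simp: underS_def)
qed

lemma exists_common_underS: "\<exists>c. a \<in> underS r c \<and> b \<in> underS r c"
proof -
  have *: "\<exists>c. a \<in> underS r c \<and> b \<in> underS r c" if "(a, b) \<in> r" for a b
  proof -
    obtain c where c: "b \<in> underS r c" using exists_underS by blast
    then have "(b, c) \<in> r" "b \<noteq> c" by (auto simp: underS_def)
    then have "(a, c) \<in> r" "a \<noteq> c" using that r_trans r_antisym by blast+
    then show ?thesis using c by (auto simp: underS_def)
  qed
  show ?thesis using *[of a b] *[of b a] r_total by blast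
qed

lemma card_of_predecessors_less:
  assumes "inj_on \<phi> J"
  shows "|{k \<in> J. (\<phi> k, \<phi> j) \<in> r - Id}| <o |UNIV :: 'i set|"
proof -
  let ?K = "{k \<in> J. (\<phi> k, \<phi> j) \<in> r - Id}"
  have "\<phi> ` ?K \<subseteq> underS r (\<phi> j)" unfolding underS_def by auto
  moreover have "inj_on \<phi> ?K" using assms by (rule inj_on_subset) blast
  ultimately have "|?K| \<le>o |underS r (\<phi> j)|"
    by (intro iffD1[OF card_of_ordLeq] exI[of _ \<phi>]) blast
  then show ?thesis using card_of_underS_less by (rule ordLeq_ordLess_trans)
qed

text \<open>Transfinite recursion along \<open>r\<close>: each \<open>f j\<close> avoids the fewer than \<open>|UNIV :: 'i set|\<close>
  values chosen before it.\<close>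

lemma exists_inj_on_choice:
  fixes C :: "'j \<Rightarrow> 'a set"
  assumes J: "|J| \<le>o |UNIV :: 'i set|"
    and C: "\<And>j. j \<in> J \<Longrightarrow> |UNIV :: 'i set| \<le>o |C j|"
  shows "\<exists>f. inj_on f J \<and> (\<forall>j\<in>J. f j \<in> C j)"
proof -
  obtain \<phi> :: "'j \<Rightarrow> 'i" where inj_\<phi>: "inj_on \<phi> J"
    using J unfolding card_of_ordLeq[symmetric] by blast
  define R where "R = inv_image (r - Id) \<phi>"
  define Q where "Q j f t \<longleftrightarrow> (j \<in> J \<longrightarrow> t \<in> C j \<and> (\<forall>k\<in>J. (k, j) \<in> R \<longrightarrow> t \<noteq> f k))"
    for j and f :: "'j \<Rightarrow> 'a" and t
  have "\<exists>f. \<forall>j. Q j f (f j)"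
  proof (rule wf_recursive_choice)
    show "wf R" unfolding R_def using wf_r_minus_Id by simp
  next
    fix j and f :: "'j \<Rightarrow> 'a"
    show "\<exists>t. Q j f t"
    proof (cases "j \<in> J")
      case True
      define K where "K = {k \<in> J. (\<phi> k, \<phi> j) \<in> r - Id}"
      have "|f ` K| <o |UNIV :: 'i set|"
        unfolding K_def by (rule ordLeq_ordLess_trans[OF card_of_image card_of_predecessors_less[OF inj_\<phi>]])
      then have "|f ` K| <o |C j|"
        using C[OF True] by (rule ordLess_ordLeq_trans)
      then have "\<not> C j \<subseteq> f ` K"
        using card_of_mono1 not_ordLess_ordLeq by blast
      then have "Q j f t" if "t \<in> C j" "t \<notin> f ` K" for t
        using that unfolding Q_def K_def R_def by auto
      then show ?thesis using \<open>\<not> C j \<subseteq> f ` K\<close> by blast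
    qed (simp add: Q_def)
  next
    fix j f f' t assume "\<And>k. (k, j) \<in> R \<Longrightarrow> f k = f' k" "Q j f t"
    then show "Q j f' t" unfolding Q_def by simp
  qed
  then obtain f where f: "\<And>j. Q j f (f j)" by blast
  have "f j \<noteq> f k" if "j \<in> J" "k \<in> J" "j \<noteq> k" for j k
  proof -
    have "\<phi> j \<noteq> \<phi> k" using inj_\<phi> that by (meson inj_on_eq_iff)
    then have "(k, j) \<in> R \<or> (j, k) \<in> R" using r_total unfolding R_def by auto
    then show ?thesis using f[of j] f[of k] that unfolding Q_def by metis
  qed
  then have "inj_on f J" by (meson inj_onI)
  moreover have "\<forall>j\<in>J. f j \<in> C j" using f unfolding Q_def by blast
  ultimately show ?thesis by blast
qed

lemma exists_translations_avoiding:
  fixes E :: "real set"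
  assumes E: "|E| \<le>o |UNIV :: 'i set|"
    and less: "|UNIV :: 'i set| <o |UNIV :: real set|"
  shows "\<exists>t :: 'i \<Rightarrow> real. \<forall>a b. (b, a) \<in> r - Id \<longrightarrow> t a - t b \<notin> E"
proof -
  define Q where "Q a g s \<longleftrightarrow> (\<forall>b. (b, a) \<in> r - Id \<longrightarrow> s - g b \<notin> E)"
    for a and g :: "'i \<Rightarrow> real" and s
  have "\<exists>t. \<forall>a. Q a t (t a)"
  proof (rule wf_recursive_choice[OF wf_r_minus_Id])
    fix a and g :: "'i \<Rightarrow> real"
    define Forbidden where "Forbidden = (\<Union>b\<in>underS r a. (+) (g b) ` E)"
    have translate: "|(+) c ` E| \<le>o |UNIV :: 'i set|" for c
      using card_of_image E by (rule ordLeq_transitive)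
    have "|Forbidden| \<le>o |UNIV :: 'i set|" unfolding Forbidden_def
      by (rule card_of_UNION_ordLeq_infinite[OF infinite_UNIV])
        (use translate card_of_underS_less ordLess_imp_ordLeq in auto)
    then have "|Forbidden| <o |UNIV :: real set|" using less by (rule ordLeq_ordLess_trans)
    then have "Forbidden \<noteq> UNIV" using ordLess_irreflexive by force
    then obtain s where s: "s \<notin> Forbidden" by blast
    have "Q a g s" unfolding Q_def
    proof (intro allI impI)
      fix b assume "(b, a) \<in> r - Id"
      then have "b \<in> underS r a" by (auto simp: underS_def)
      then show "s - g b \<notin> E" using s unfolding Forbidden_def by force
    qed
    then show "\<exists>s. Q a g s" by blast
  next
    fix a g g' s assume "\<And>b. (b, a) \<in> r - Id \<Longrightarrow> g b = g' b" "Q a g s"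
    then show "Q a g' s" unfolding Q_def by simp
  qed
  then show ?thesis unfolding Q_def by blast
qed

lemma exists_disjoint_translates:
  fixes A :: "real set"
  assumes A: "|A| \<le>o |UNIV :: 'i set|"
    and less: "|UNIV :: 'i set| <o |UNIV :: real set|"
  shows "\<exists>t :: 'i \<Rightarrow> real. disjoint_family (\<lambda>a. (+) (t a) ` A)"
proof -
  define E where "E = (\<lambda>(x, y). x - y) ` (A \<times> A)"
  have "|E| \<le>o |A \<times> A|" unfolding E_def by (rule card_of_image)
  also have "|A \<times> A| \<le>o |A \<times> (UNIV :: 'i set)|" by (rule card_of_Times_mono2[OF A])
  also have "|A \<times> (UNIV :: 'i set)| \<le>o |(UNIV :: 'i set) \<times> (UNIV :: 'i set)|"
    by (rule card_of_Times_mono1[OF A])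
  also have "|(UNIV :: 'i set) \<times> (UNIV :: 'i set)| =o |UNIV :: 'i set|"
    by (rule card_of_Times_same_infinite[OF infinite_UNIV])
  finally have "|E| \<le>o |UNIV :: 'i set|" .
  then obtain t :: "'i \<Rightarrow> real" where t: "\<And>a b. (b, a) \<in> r - Id \<Longrightarrow> t a - t b \<notin> E"
    using exists_translations_avoiding less by blast
  have "(+) (t a) ` A \<inter> (+) (t b) ` A = {}" if "a \<noteq> b" for a b
  proof (rule ccontr)
    assume "(+) (t a) ` A \<inter> (+) (t b) ` A \<noteq> {}"
    then obtain x y where xy: "x \<in> A" "y \<in> A" "t a + x = t b + y" by auto
    have "y - x \<in> E" "x - y \<in> E" unfolding E_def using xy(1,2) by force+
    moreover have "t a - t b = y - x" "t b - t a = x - y" using xy(3) by linarith+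
    ultimately have "t a - t b \<in> E" "t b - t a \<in> E" by (simp_all only:)
    moreover have "(b, a) \<in> r - Id \<or> (a, b) \<in> r - Id" using r_total that by auto
    ultimately show False using t by blast
  qed
  then show ?thesis unfolding disjoint_family_on_def by blast
qed

end

definition nonmeasurable_partition :: "('i \<Rightarrow> real set) \<Rightarrow> bool" where
  "nonmeasurable_partition P \<longleftrightarrow> disjoint_family P \<and> |\<Union>(range P)| \<le>o |UNIV :: 'i set| \<and>
     (\<forall>S. S \<noteq> {} \<longrightarrow> (\<Union>a\<in>S. P a) \<notin> sets lebesgue)"

locale nonN_card_order =
  fixes r :: "('i \<times> 'i) set"
  assumes card_order: "card_order r"
    and card_nonN: "has_card_nonN (UNIV :: 'i set)"
begin

lemma exists_non_null_of_card:
  "\<exists>A. A \<subseteq> {0..1 :: real} \<and> A \<notin> null_sets lebesgue \<and> |A| =o |UNIV :: 'i set|"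
  using card_nonN unfolding has_card_nonN_def by blast

lemma null_sets_if_card_less:
  fixes S :: "real set"
  assumes "|S| <o |UNIV :: 'i set|"
  shows "S \<in> null_sets lebesgue"
proof (rule null_sets_if_card_ordLess[OF _ assms])
  show "A \<in> null_sets lebesgue" if "A \<subseteq> {0..1}" "|A| <o |UNIV :: 'i set|" for A :: "real set"
    using card_nonN that unfolding has_card_nonN_def by blast
qed

lemma card_le_if_not_null:
  fixes S :: "real set"
  assumes "S \<notin> null_sets lebesgue"
  shows "|UNIV :: 'i set| \<le>o |S|"
proof (rule ccontr)
  assume "\<not> |UNIV :: 'i set| \<le>o |S|"
  then have "|S| <o |UNIV :: 'i set|"
    by (simp add: not_ordLeq_iff_ordLess[OF card_of_Well_order card_of_Well_order])
  then show False using null_sets_if_card_less assms by blast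
qed

sublocale infinite_card_order
proof
  show "card_order r" by (fact card_order)
  obtain A :: "real set" where A: "A \<notin> null_sets lebesgue" "|A| =o |UNIV :: 'i set|"
    using exists_non_null_of_card by blast
  show "infinite (UNIV :: 'i set)"
  proof
    assume "finite (UNIV :: 'i set)"
    then have "finite A" using card_of_ordIso_finite[OF A(2)] by simp
    then show False using A(1) negligible_finite negligible_iff_null_sets by blast
  qed
qed

lemma exists_nonmeasurable_partition_less_continuum:
  assumes less: "|UNIV :: 'i set| <o |UNIV :: real set|"
  shows "\<exists>P :: 'i \<Rightarrow> real set. nonmeasurable_partition P"
proof -
  obtain A :: "real set" where A: "A \<notin> null_sets lebesgue" "|A| =o |UNIV :: 'i set|"
    using exists_non_null_of_card by blast
  obtain t :: "'i \<Rightarrow> real" where disjoint: "disjoint_family (\<lambda>a. (+) (t a) ` A)"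
    using exists_disjoint_translates[OF ordIso_imp_ordLeq[OF A(2)] less] by blast
  define P where "P a = (+) (t a) ` A" for a
  have "|P a| \<le>o |UNIV :: 'i set|" for a
    unfolding P_def using card_of_image A(2) ordLeq_ordIso_trans by blast
  then have card_union: "|\<Union>(range P)| \<le>o |UNIV :: 'i set|"
    by (intro card_of_UNION_ordLeq_infinite[OF infinite_UNIV]) (auto intro: ordIso_imp_ordLeq[OF card_of_refl])
  have "(\<Union>a\<in>S. P a) \<notin> sets lebesgue" if "S \<noteq> {}" for S
  proof (rule not_lebesgue_measurable_if_card_less_continuum)
    have "|\<Union>a\<in>S. P a| \<le>o |\<Union>(range P)|" by (rule card_of_mono1) blast
    also have "|\<Union>(range P)| \<le>o |UNIV :: 'i set|" by (fact card_union)
    finally show "|\<Union>a\<in>S. P a| <o |UNIV :: real set|" using less by (rule ordLeq_ordLess_trans)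
    obtain a where "a \<in> S" using \<open>S \<noteq> {}\<close> by blast
    have "\<not> negligible (P a)"
      using A(1) negligible_translation_rev negligible_iff_null_sets unfolding P_def by blast
    then show "(\<Union>a\<in>S. P a) \<notin> null_sets lebesgue"
      using \<open>a \<in> S\<close> negligible_subset[of "\<Union>a\<in>S. P a" "P a"] negligible_iff_null_sets by blast
  qed
  then show ?thesis
    using disjoint card_union unfolding nonmeasurable_partition_def P_def by blast
qed

lemma exists_inj_on_closed_non_null_choice:
  assumes ge: "|UNIV :: real set| \<le>o |UNIV :: 'i set|"
  shows "\<exists>f. inj_on f (closed_non_null \<times> (UNIV :: 'i option set)) \<and>
    (\<forall>F\<in>closed_non_null. \<forall>u. f (F, u) \<in> F)"
proof -
  let ?J = "closed_non_null \<times> (UNIV :: 'i option set)"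
  have "|closed_non_null| \<le>o |UNIV :: 'i set|"
    using card_of_closed_non_null ge by (rule ordLeq_transitive)
  then have "|?J| \<le>o |(UNIV :: 'i set) \<times> (UNIV :: 'i option set)|"
    by (rule card_of_Times_mono1)
  also have "|(UNIV :: 'i set) \<times> (UNIV :: 'i option set)| \<le>o |(UNIV :: 'i set) \<times> (UNIV :: 'i set)|"
    by (rule card_of_Times_mono2[OF card_of_option_UNIV_le[OF infinite_UNIV]])
  also have "|(UNIV :: 'i set) \<times> (UNIV :: 'i set)| =o |UNIV :: 'i set|"
    by (rule card_of_Times_same_infinite[OF infinite_UNIV])
  finally have "|?J| \<le>o |UNIV :: 'i set|" .
  moreover have "|UNIV :: 'i set| \<le>o |fst j|" if "j \<in> ?J" for j
    using that card_le_if_not_null unfolding closed_non_null_def by auto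
  ultimately obtain f where "inj_on f ?J" "\<And>j. j \<in> ?J \<Longrightarrow> f j \<in> fst j"
    using exists_inj_on_choice[of ?J fst] by blast
  then show ?thesis by auto
qed

lemma exists_nonmeasurable_partition_ge_continuum:
  assumes ge: "|UNIV :: real set| \<le>o |UNIV :: 'i set|"
  shows "\<exists>P :: 'i \<Rightarrow> real set. nonmeasurable_partition P"
proof -
  obtain f where f_inj: "inj_on f (closed_non_null \<times> (UNIV :: 'i option set))"
    and f_in: "\<And>F u. F \<in> closed_non_null \<Longrightarrow> f (F, u) \<in> F"
    using exists_inj_on_closed_non_null_choice[OF ge] by blast
  define P where "P a = (\<lambda>F. f (F, Some a)) ` closed_non_null" for a
  have f_ne: "f (F, u) \<noteq> f (F', u')" if "F \<in> closed_non_null" "F' \<in> closed_non_null" "u \<noteq> u'"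
    for F F' u u'
  proof
    assume "f (F, u) = f (F', u')"
    then have "(F, u) = (F', u')" by (rule inj_onD[OF f_inj]) (simp_all add: that(1,2))
    then show False using that(3) by simp
  qed
  have "P m \<inter> P n = {}" if "m \<noteq> n" for m n
  proof (rule equals0I)
    fix z assume "z \<in> P m \<inter> P n"
    then obtain F F' where "F \<in> closed_non_null" "F' \<in> closed_non_null" "f (F, Some m) = f (F', Some n)"
      unfolding P_def by blast
    then show False using f_ne[of F F' "Some m" "Some n"] that by simp
  qed
  then have "disjoint_family P" unfolding disjoint_family_on_def by blast
  moreover have "|\<Union>(range P)| \<le>o |UNIV :: 'i set|"
    by (rule ordLeq_transitive[OF card_of_mono1[OF subset_UNIV] ge])
  \<comment> \<open>a point of \<open>F\<close> lies in the union, another one outside it\<close>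
  moreover have "(\<Union>a\<in>S. P a) \<notin> sets lebesgue" if "S \<noteq> {}" for S
  proof (rule not_lebesgue_measurable_if_Bernstein)
    fix F assume F: "F \<in> closed_non_null"
    obtain a where "a \<in> S" using \<open>S \<noteq> {}\<close> by blast
    have "f (F, None) \<notin> (\<Union>a\<in>S. P a)"
    proof
      assume "f (F, None) \<in> (\<Union>a\<in>S. P a)"
      then obtain b F' where "F' \<in> closed_non_null" "f (F, None) = f (F', Some b)" unfolding P_def by blast
      then show False using f_ne[OF F \<open>F' \<in> closed_non_null\<close>, of None "Some b"] by simp
    qed
    moreover have "f (F, Some a) \<in> P a" using F unfolding P_def by blast
    then have "f (F, Some a) \<in> (\<Union>a\<in>S. P a)" using \<open>a \<in> S\<close> by blast
    moreover have "f (F, u) \<in> F" for u using f_in[OF F] .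
    ultimately show "\<not> F \<subseteq> (\<Union>a\<in>S. P a) \<and> \<not> F \<subseteq> - (\<Union>a\<in>S. P a)"
      by blast
  qed
  ultimately show ?thesis unfolding nonmeasurable_partition_def by blast
qed

lemma exists_nonmeasurable_partition: "\<exists>P :: 'i \<Rightarrow> real set. nonmeasurable_partition P"
proof (cases "|UNIV :: 'i set| <o |UNIV :: real set|")
  case True
  then show ?thesis by (rule exists_nonmeasurable_partition_less_continuum)
next
  case False
  then have "|UNIV :: real set| \<le>o |UNIV :: 'i set|"
    by (simp add: not_ordLess_iff_ordLeq[OF card_of_Well_order card_of_Well_order])
  then show ?thesis by (rule exists_nonmeasurable_partition_ge_continuum)
qed

end

section \<open>Truncations of functions that are simple on the pieces\<close>

lemma filter_eq_imp_eq_on_set: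
  assumes "filter p xs = filter q xs" "x \<in> set xs"
  shows "p x = q x"
proof -
  have "x \<in> set (filter p xs) \<longleftrightarrow> x \<in> set (filter q xs)" using assms(1) by simp
  then show ?thesis using assms(2) by auto
qed

text \<open>Hausdorff's independent family, indexed by finite data: \<open>(xs, yss)\<close> belongs to the
  member of \<open>A\<close> iff the trace of \<open>A\<close> on the list \<open>xs\<close> is one of the traces listed in \<open>yss\<close>.\<close>

definition indep_family :: "'a set \<Rightarrow> ('a list \<times> 'a list list) set" where
  "indep_family A = {(xs, yss). filter (\<lambda>x. x \<in> A) xs \<in> set yss}"

lemma indep_family_independent:
  assumes "finite T" "A \<notin> T"
  shows "\<exists>c\<^sub>1 c\<^sub>2. c\<^sub>1 \<in> indep_family A \<and> c\<^sub>2 \<notin> indep_family A \<and>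
    (\<forall>B\<in>T. c\<^sub>1 \<in> indep_family B \<and> c\<^sub>2 \<in> indep_family B)"
proof -
  obtain Ts where Ts: "set Ts = T" using assms(1) finite_list by blast
  have "\<exists>d. (d \<in> A) \<noteq> (d \<in> B)" if "B \<in> T" for B
  proof -
    have "A \<noteq> B" using that assms(2) by blast
    then show ?thesis by blast
  qed
  then obtain d where d: "\<And>B. B \<in> T \<Longrightarrow> (d B \<in> A) \<noteq> (d B \<in> B)" by metis
  define xs where "xs = map d Ts"
  define yss where "yss = map (\<lambda>B. filter (\<lambda>x. x \<in> B) xs) Ts"
  have "filter (\<lambda>x. x \<in> A) xs \<notin> set yss"
  proof
    assume "filter (\<lambda>x. x \<in> A) xs \<in> set yss"
    then obtain B where B: "B \<in> T" "filter (\<lambda>x. x \<in> A) xs = filter (\<lambda>x. x \<in> B) xs"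
      unfolding yss_def using Ts by auto
    have "d B \<in> set xs" unfolding xs_def using B Ts by auto
    then show False using filter_eq_imp_eq_on_set[OF B(2)] d[OF B(1)] by blast
  qed
  moreover have "filter (\<lambda>x. x \<in> B) xs \<in> set yss" if "B \<in> T" for B
    unfolding yss_def using that Ts by simp
  ultimately have "(xs, filter (\<lambda>x. x \<in> A) xs # yss) \<in> indep_family A" "(xs, yss) \<notin> indep_family A"
    "\<forall>B\<in>T. (xs, filter (\<lambda>x. x \<in> A) xs # yss) \<in> indep_family B \<and> (xs, yss) \<in> indep_family B"
    by (simp_all add: indep_family_def)
  then show ?thesis by blast
qed

locale nonmeasurable_partition_sequences = nonN_card_order r for r :: "('i \<times> 'i) set" +
  fixes P :: "'i \<Rightarrow> real set"
  assumes partition: "nonmeasurable_partition P"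
begin

lemma disjoint_pieces: "a \<noteq> b \<Longrightarrow> P a \<inter> P b = {}"
  using partition unfolding nonmeasurable_partition_def disjoint_family_on_def by blast

lemma not_measurable_pieces: "S \<noteq> {} \<Longrightarrow> (\<Union>a\<in>S. P a) \<notin> sets lebesgue"
  using partition unfolding nonmeasurable_partition_def by blast

lemma pieces_nonempty: "P a \<noteq> {}"
  using not_measurable_pieces[of "{a}"] by auto

definition X :: "real set" where "X = \<Union>(range P)"

definition enum :: "'i \<Rightarrow> real" where "enum = (SOME e. range e = X)"

lemma range_enum: "range enum = X"
proof -
  have "X \<noteq> {}" using pieces_nonempty unfolding X_def by blast
  then have "\<exists>e :: 'i \<Rightarrow> real. range e = X"
    using card_of_ordLeq2[of X "UNIV :: 'i set"] partition
    unfolding nonmeasurable_partition_def X_def by blast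
  then show ?thesis unfolding enum_def by (rule someI_ex)
qed

definition stage :: "'i \<Rightarrow> real set" where "stage i = enum ` underS r i"

lemma null_stage: "stage i \<in> null_sets lebesgue"
proof -
  have "|stage i| \<le>o |underS r i|" unfolding stage_def by (rule card_of_image)
  then have "|stage i| <o |UNIV :: 'i set|" using card_of_underS_less by (rule ordLeq_ordLess_trans)
  then show ?thesis by (rule null_sets_if_card_less)
qed

lemma stage_subset: "stage i \<subseteq> X"
  unfolding stage_def using range_enum by auto

lemma eventually_in_stage:
  assumes "x \<in> X"
  shows "\<exists>j. \<forall>i. j \<in> underS r i \<longrightarrow> x \<in> stage i"
proof -
  obtain j where "x = enum j" using assms range_enum by blast
  then show ?thesis unfolding stage_def by blast
qed

lemma exists_common_stage:
  assumes "x \<in> X" "y \<in> X"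
  shows "\<exists>i. x \<in> stage i \<and> y \<in> stage i"
proof -
  obtain j\<^sub>x where j\<^sub>x: "\<forall>i. j\<^sub>x \<in> underS r i \<longrightarrow> x \<in> stage i" using eventually_in_stage[OF assms(1)] by blast
  obtain j\<^sub>y where j\<^sub>y: "\<forall>i. j\<^sub>y \<in> underS r i \<longrightarrow> y \<in> stage i" using eventually_in_stage[OF assms(2)] by blast
  obtain i where "j\<^sub>x \<in> underS r i" "j\<^sub>y \<in> underS r i" using exists_common_underS by blast
  then show ?thesis using j\<^sub>x j\<^sub>y by blast
qed

definition truncation :: "(real \<Rightarrow> real) \<Rightarrow> 'i \<Rightarrow> real \<Rightarrow> real" where
  "truncation h = (\<lambda>i x. if x \<in> stage i then h x else 0)"

definition simple_on_pieces :: "(real \<Rightarrow> real) \<Rightarrow> bool" where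
  "simple_on_pieces h \<longleftrightarrow> finite (range h) \<and> (\<forall>x. x \<notin> X \<longrightarrow> h x = 0) \<and>
     (\<forall>a. \<forall>x\<in>P a. \<forall>y\<in>P a. h x = h y)"

definition truncations :: "('i \<Rightarrow> real \<Rightarrow> real) set" where
  "truncations = truncation ` {h. simple_on_pieces h}"

lemma simple_on_pieces_combine:
  assumes "simple_on_pieces h" "simple_on_pieces h'" "f 0 0 = 0"
  shows "simple_on_pieces (\<lambda>x. f (h x) (h' x))"
proof -
  have "range (\<lambda>x. f (h x) (h' x)) \<subseteq> (\<lambda>(u, v). f u v) ` (range h \<times> range h')" by auto
  moreover have "finite ((\<lambda>(u, v). f u v) ` (range h \<times> range h'))"
    using assms(1,2) unfolding simple_on_pieces_def by simp
  ultimately have "finite (range (\<lambda>x. f (h x) (h' x)))" by (rule finite_subset)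
  moreover have "f (h x) (h' x) = 0" if "x \<notin> X" for x
  proof -
    have "h x = 0" "h' x = 0" using assms(1,2) that unfolding simple_on_pieces_def by blast+
    then show ?thesis using assms(3) by simp
  qed
  moreover have "f (h x) (h' x) = f (h y) (h' y)" if "x \<in> P a" "y \<in> P a" for a x y
  proof -
    have "h x = h y" "h' x = h' y" using assms(1,2) that unfolding simple_on_pieces_def by blast+
    then show ?thesis by simp
  qed
  ultimately show ?thesis unfolding simple_on_pieces_def by blast
qed

lemma truncation_combine:
  "f 0 0 = 0 \<Longrightarrow> (\<lambda>i x. f (truncation h i x) (truncation h' i x)) = truncation (\<lambda>x. f (h x) (h' x))"
  by (auto simp: truncation_def fun_eq_iff)

lemma subalg_truncations: "subalg truncations"
proof -
  have combine: "(\<lambda>i x. f (F i x) (G i x)) \<in> truncations"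
    if F: "F \<in> truncations" and G: "G \<in> truncations" and f: "f 0 0 = 0"
    for F G and f :: "real \<Rightarrow> real \<Rightarrow> real"
  proof -
    obtain h h' where h: "F = truncation h" "simple_on_pieces h"
      and h': "G = truncation h'" "simple_on_pieces h'"
      using F G unfolding truncations_def by blast
    have "simple_on_pieces (\<lambda>x. f (h x) (h' x))" using simple_on_pieces_combine[of h h' f, OF h(2) h'(2) f] .
    moreover have "(\<lambda>i x. f (F i x) (G i x)) = truncation (\<lambda>x. f (h x) (h' x))"
      unfolding h(1) h'(1) by (rule truncation_combine[of f h h', OF f])
    ultimately show ?thesis unfolding truncations_def by blast
  qed
  have "(\<lambda>i x. 0) = truncation (\<lambda>x. 0)" by (simp add: truncation_def)
  moreover have "simple_on_pieces (\<lambda>x. 0)" unfolding simple_on_pieces_def by simp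
  ultimately have "(\<lambda>i x. 0) \<in> truncations" unfolding truncations_def by blast
  then show ?thesis unfolding subalg_def
  proof (intro conjI ballI allI)
    fix F G assume "F \<in> truncations" "G \<in> truncations"
    then show "(\<lambda>i x. F i x + G i x) \<in> truncations" "(\<lambda>i x. F i x * G i x) \<in> truncations"
      using combine[where f = "(+)"] combine[where f = "(*)"] by simp_all
  next
    fix F and c :: real assume "F \<in> truncations"
    then show "(\<lambda>i x. c * F i x) \<in> truncations"
      using combine[where f = "\<lambda>u v. c * u"] by simp
  qed
qed

lemma truncation_measurable: "truncation h i \<in> borel_measurable lebesgue"
proof (rule borel_measurable_AE[of "\<lambda>x. 0"])
  show "AE x in lebesgue. 0 = truncation h i x"
    using AE_not_in[OF null_stage[of i]] by eventually_elim (simp add: truncation_def)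
qed simp

lemma kconv_truncation:
  assumes "simple_on_pieces h"
  shows "kconv r (\<lambda>i. truncation h i x) (h x)"
  unfolding kconv_def
proof (intro allI impI)
  fix U assume U: "open U \<and> h x \<in> U"
  show "\<exists>a\<^sub>0\<in>Field r. \<forall>a\<in>Field r. (a\<^sub>0, a) \<in> r \<and> a \<noteq> a\<^sub>0 \<longrightarrow> truncation h a x \<in> U"
  proof (cases "x \<in> X")
    case True
    then obtain j where j: "\<forall>i. j \<in> underS r i \<longrightarrow> x \<in> stage i" using eventually_in_stage by blast
    have "truncation h a x \<in> U" if "(j, a) \<in> r \<and> a \<noteq> j" for a
      using that j U by (auto simp: underS_def truncation_def)
    then show ?thesis using Field_r by blast
  next
    case False
    then have "x \<notin> stage a" for a using stage_subset by blast
    moreover have "h x = 0" using False assms unfolding simple_on_pieces_def by blast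
    ultimately show ?thesis using U Field_r by (simp add: truncation_def)
  qed
qed

lemma not_measurable_if_simple_on_pieces:
  assumes h: "simple_on_pieces h" and "h x\<^sub>0 \<noteq> 0"
  shows "h \<notin> borel_measurable lebesgue"
proof
  assume "h \<in> borel_measurable lebesgue"
  then have "h -` {h x\<^sub>0} \<in> sets lebesgue"
    using measurable_sets[of h lebesgue borel "{h x\<^sub>0}"] by simp
  moreover
  \<comment> \<open>a level set of \<open>h\<close> is a union of pieces, and a nonempty one when the level is nonzero\<close>
  define S where "S = {a. \<exists>y\<in>P a. h y = h x\<^sub>0}"
  have "h -` {h x\<^sub>0} = (\<Union>a\<in>S. P a)"
  proof (intro equalityI subsetI)
    fix y assume y: "y \<in> h -` {h x\<^sub>0}"
    then have "h y \<noteq> 0" using assms(2) by simp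
    then have "y \<in> X" using h unfolding simple_on_pieces_def by blast
    then obtain a where "y \<in> P a" unfolding X_def by blast
    then show "y \<in> (\<Union>a\<in>S. P a)" using y unfolding S_def by blast
  next
    fix y assume "y \<in> (\<Union>a\<in>S. P a)"
    then obtain a y' where "y \<in> P a" "y' \<in> P a" "h y' = h x\<^sub>0" unfolding S_def by blast
    moreover have "h y = h y'" using h calculation(1,2) unfolding simple_on_pieces_def by blast
    ultimately show "y \<in> h -` {h x\<^sub>0}" by simp
  qed
  moreover have "S \<noteq> {}"
  proof -
    have "x\<^sub>0 \<in> X" using assms unfolding simple_on_pieces_def by blast
    then obtain a where "x\<^sub>0 \<in> P a" unfolding X_def by blast
    then show ?thesis unfolding S_def by blast
  qed
  ultimately show False using not_measurable_pieces by simp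
qed

lemma truncations_in_AN:
  assumes "F \<in> truncations" "F \<noteq> (\<lambda>i x. 0)"
  shows "F \<in> AN r"
proof -
  obtain h where h: "F = truncation h" "simple_on_pieces h"
    using assms(1) unfolding truncations_def by blast
  then obtain x\<^sub>0 where "h x\<^sub>0 \<noteq> 0"
    using assms(2) unfolding truncation_def by (auto simp: fun_eq_iff split: if_splits)
  then have "h \<notin> borel_measurable lebesgue" using not_measurable_if_simple_on_pieces h(2) by blast
  moreover have "AE x in lebesgue. kconv r (\<lambda>i. F i x) (h x)" using kconv_truncation h by simp
  ultimately show ?thesis unfolding AN_def using truncation_measurable h(1) by blast
qed

lemma card_of_truncations: "|truncations| \<le>o |Pow (UNIV :: 'i set)|"
proof -
  have "\<forall>a. \<exists>y. y \<in> P a" using pieces_nonempty by blast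
  then obtain x :: "'i \<Rightarrow> real" where x: "\<And>a. x a \<in> P a" by metis
  have "x a \<in> X" for a using x unfolding X_def by blast
  then have "\<forall>a. \<exists>i. x a \<in> stage i" using exists_common_stage by blast
  then obtain i :: "'i \<Rightarrow> 'i" where i: "\<And>a. x a \<in> stage (i a)" by metis
  \<comment> \<open>a truncation is determined by the values of \<open>h\<close> at one point of each piece\<close>
  have "inj_on (\<lambda>F a. F (i a) (x a)) truncations"
  proof
    fix F F' assume "F \<in> truncations" "F' \<in> truncations" and eq: "(\<lambda>a. F (i a) (x a)) = (\<lambda>a. F' (i a) (x a))"
    then obtain h h' where h: "F = truncation h" "simple_on_pieces h"
      and h': "F' = truncation h'" "simple_on_pieces h'"
      unfolding truncations_def by blast
    have "h (x a) = h' (x a)" for a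
      using fun_cong[OF eq, of a] i unfolding h h' truncation_def by simp
    then have "h y = h' y" for y
    proof (cases "y \<in> X")
      case True
      then obtain a where "y \<in> P a" unfolding X_def by blast
      then have "h y = h (x a)" "h' y = h' (x a)"
        using h(2) h'(2) x unfolding simple_on_pieces_def by blast+
      then show ?thesis using \<open>h (x a) = h' (x a)\<close> by simp
    next
      case False
      then have "h y = 0" "h' y = 0" using h(2) h'(2) unfolding simple_on_pieces_def by blast+
      then show ?thesis by simp
    qed
    then have "h = h'" by (rule ext)
    then show "F = F'" unfolding h h' by simp
  qed
  then have "|truncations| \<le>o |UNIV :: ('i \<Rightarrow> real) set|"
    using card_of_ordLeq[of truncations "UNIV :: ('i \<Rightarrow> real) set"] by blast
  also have "|UNIV :: ('i \<Rightarrow> real) set| \<le>o |UNIV :: 'i set set|"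
    by (rule card_of_real_funs_le_Pow[OF infinite_UNIV])
  finally show ?thesis by simp
qed

definition code :: "'i list \<times> 'i list list \<Rightarrow> 'i" where "code = (SOME f. inj f)"

lemma inj_code: "inj code"
  unfolding code_def using exists_inj_list_pairs_to_infinite[OF infinite_UNIV] by (rule someI_ex)

definition generator :: "'i set \<Rightarrow> 'i \<Rightarrow> real \<Rightarrow> real" where
  "generator A = truncation (indicator (\<Union>a\<in>code ` indep_family A. P a))"

lemma mem_UN_pieces_iff:
  assumes "x \<in> P a"
  shows "x \<in> (\<Union>b\<in>S. P b) \<longleftrightarrow> a \<in> S"
proof
  assume "x \<in> (\<Union>b\<in>S. P b)"
  then obtain b where b: "b \<in> S" "x \<in> P b" by blast
  have "b = a"
  proof (rule ccontr)
    assume "b \<noteq> a"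
    then have "P b \<inter> P a = {}" by (rule disjoint_pieces)
    then show False using b(2) assms by blast
  qed
  then show "a \<in> S" using b(1) by simp
qed (use assms in blast)

lemma generator_in_truncations: "generator A \<in> truncations"
proof -
  let ?h = "indicator (\<Union>a\<in>code ` indep_family A. P a) :: real \<Rightarrow> real"
  have "range ?h \<subseteq> {0, 1}" by (auto simp: indicator_def)
  then have "finite (range ?h)" by (rule finite_subset) simp
  moreover have "?h x = 0" if "x \<notin> X" for x
  proof -
    have "x \<notin> (\<Union>a\<in>code ` indep_family A. P a)" using that unfolding X_def by blast
    then show ?thesis by simp
  qed
  moreover have "?h x = ?h y" if "x \<in> P a" "y \<in> P a" for a x y
  proof -
    have "x \<in> (\<Union>a\<in>code ` indep_family A. P a) \<longleftrightarrow> a \<in> code ` indep_family A"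
      and "y \<in> (\<Union>a\<in>code ` indep_family A. P a) \<longleftrightarrow> a \<in> code ` indep_family A"
      by (rule mem_UN_pieces_iff[OF that(1)], rule mem_UN_pieces_iff[OF that(2)])
    then show ?thesis unfolding indicator_def by (simp only:)
  qed
  ultimately have "?h \<in> {h. simple_on_pieces h}" unfolding simple_on_pieces_def by blast
  then show ?thesis unfolding truncations_def generator_def by (rule imageI)
qed

lemma generator_separates:
  assumes "finite T" "A \<notin> T"
  shows "\<exists>i x y. generator A i x = 1 \<and> generator A i y = 0 \<and> (\<forall>B\<in>T. generator B i x = 1 \<and> generator B i y = 1)"
proof -
  obtain c\<^sub>1 c\<^sub>2 where c: "c\<^sub>1 \<in> indep_family A" "c\<^sub>2 \<notin> indep_family A"
    "\<forall>B\<in>T. c\<^sub>1 \<in> indep_family B \<and> c\<^sub>2 \<in> indep_family B"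
    using indep_family_independent[OF assms] by blast
  obtain x y where x: "x \<in> P (code c\<^sub>1)" and y: "y \<in> P (code c\<^sub>2)"
    using pieces_nonempty by blast
  then have "x \<in> X" "y \<in> X" unfolding X_def by auto
  then obtain i where "x \<in> stage i" "y \<in> stage i" using exists_common_stage by blast
  moreover have "x \<in> (\<Union>a\<in>code ` indep_family B. P a) \<longleftrightarrow> c\<^sub>1 \<in> indep_family B"
    and "y \<in> (\<Union>a\<in>code ` indep_family B. P a) \<longleftrightarrow> c\<^sub>2 \<in> indep_family B" for B
    by (simp_all only: mem_UN_pieces_iff[OF x] mem_UN_pieces_iff[OF y] inj_image_mem_iff[OF inj_code])
  ultimately show ?thesis
    using c by (intro exI[of _ i] exI[of _ x] exI[of _ y]) (simp add: generator_def truncation_def)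
qed

lemma inj_generator: "inj generator"
proof
  fix A B assume eq: "generator A = generator B"
  show "A = B"
  proof (rule ccontr)
    assume "A \<noteq> B"
    then have "\<exists>i y. generator A i y = 0 \<and> generator B i y = 1"
      using generator_separates[of "{B}" A] by auto
    then obtain i y where "generator A i y = 0" "generator B i y = 1" by blast
    then show False using eq by simp
  qed
qed

lemma separates_independently_generators: "separates_independently (range generator)"
  unfolding separates_independently_def
proof (intro ballI allI impI)
  fix s T assume s: "s \<in> range generator" and T: "finite T \<and> T \<subseteq> range generator - {s}"
  obtain A where A: "s = generator A" using s by blast
  have "finite T" using T by simp
  then have "finite (generator -` T)" using inj_generator by (rule finite_vimageI)
  moreover have "generator A \<notin> T" using T A by blast
  then have "A \<notin> generator -` T" by simp
  ultimately obtain i x y where sep: "generator A i x = 1" "generator A i y = 0"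
    "\<forall>B\<in>generator -` T. generator B i x = 1 \<and> generator B i y = 1"
    by (meson generator_separates)
  have "\<forall>t\<in>T. t i x = t i y"
  proof
    fix t assume "t \<in> T"
    then obtain B where "t = generator B" "B \<in> generator -` T" using T by blast
    then show "t i x = t i y" using sep(3) by simp
  qed
  moreover have "s i x \<noteq> s i y" using A sep(1,2) by simp
  ultimately show "\<exists>i x y. (\<forall>t\<in>T. t i x = t i y) \<and> s i x \<noteq> s i y" by blast
qed

lemma card_of_generators: "|range generator| =o |Pow (UNIV :: 'i set)|"
proof -
  have "bij_betw generator UNIV (range generator)" using inj_generator by (simp add: bij_betw_def)
  then have "|UNIV :: 'i set set| =o |range generator|" using card_of_ordIso by blast
  then show ?thesis using ordIso_symmetric by simp
qed

lemma algebrable_AN: "algebrable (Pow (UNIV :: 'i set)) (AN r)"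
proof -
  let ?G = "range generator" and ?B = "alg_gen (range generator)"
  have min: "minimal_generators ?G ?B"
    by (rule minimal_generators_alg_gen[OF separates_independently_generators])
  have B_truncations: "?B \<subseteq> truncations"
    using generator_in_truncations by (intro alg_gen_minimal[OF subalg_truncations]) blast
  obtain H where H: "?G \<subseteq> H" "H \<subseteq> ?B" "lin_indep H" "lin_span H = ?B"
    using exists_basis_extending[OF subalg_alg_gen subset_alg_gen lin_indep_if_minimal_generators[OF min]]
    by blast
  have "H \<subseteq> truncations" using H(2) B_truncations by (rule subset_trans)
  then have "|H| \<le>o |truncations|" by (rule card_of_mono1)
  then have "|H| \<le>o |Pow (UNIV :: 'i set)|" using card_of_truncations by (rule ordLeq_transitive)
  moreover have "|Pow (UNIV :: 'i set)| \<le>o |H|"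
    using ordIso_ordLeq_trans[OF ordIso_symmetric[OF card_of_generators] card_of_mono1[OF H(1)]] .
  ultimately have "|H| =o |Pow (UNIV :: 'i set)|" by (simp add: ordIso_iff_ordLeq)
  then have "vdim_eq ?B (Pow (UNIV :: 'i set))"
    unfolding vdim_eq_def using H by blast
  moreover have "?B - {\<lambda>i x. 0} \<subseteq> AN r" using B_truncations truncations_in_AN by blast
  ultimately show ?thesis
    unfolding algebrable_def using subalg_alg_gen min card_of_generators by blast
qed

end

theorem mainTheorem16:
  fixes r :: "('i \<times> 'i) set"
  assumes "card_order r"
    and "has_card_nonN (UNIV :: 'i set)"
  shows "algebrable (Pow (UNIV :: 'i set)) (AN r)"
proof -
  interpret nonN_card_order r using assms by unfold_locales
  obtain P :: "'i \<Rightarrow> real set" where "nonmeasurable_partition P"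
    using exists_nonmeasurable_partition by blast
  then interpret nonmeasurable_partition_sequences r P by unfold_locales
  show ?thesis by (rule algebrable_AN)
qed

end
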